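(* Let $(X,M,* )$ be a G-complete fuzzy metric space and let $(\hat{C}_0(X),\Theta_{\mathcal{M}},* )$ be the associated Hausdorff fuzzy metric space on the collection $\hat{C}_0(X)$ of nonempty compact subsets of $X$. Let $T:X\to\hat{C}_0(X)$ be a multi-valued (1)-Kannan contraction, i.e. there is a constant $c\in(0,1)$ such that for all $x,y\in X$ and all $t>0$, \[ \min\{\mathcal{M}(x,Tx,t),\mathcal{M}(y,Ty,t)\}>1-t \;\Longrightarrow\; \Theta_{\mathcal{M}}(Tx,Ty,ct)>1-ct. \] Then $T$ has a fixed point, i.e. there exists $z\in X$ with $z\in Tz$.
   Context: A continuous $t$-norm is a binary operation $*:[0,1]\times[0,1]\to[0,1]$ that is associative, commutative, continuous, satisfies $a*1=a$ for all $a\in[0,1]$, and is monotone: $a*b\le c*d$ whenever $a\le c$ and $b\le d$. A fuzzy metric space (in the sense of George–Veeramani) is a triple $(X,M,* )$ where $X$ is a nonempty set, $*$ is a continuous $t$-norm and $M:X\times X\times(0,\infty)\to[0,1]$ satisfies, for all $x,y,z\in X$ and $t,s>0$: (F1) $M(x,y,t)>0$; (F2) $M(x,y,t)=1$ for all $t>0$ iff $x=y$; (F3) $M(x,y,t)=M(y,x,t)$; (F4) $M(x,z,t+s)\ge M(x,y,t)*M(y,z,s)$; (F5) $M(x,y,\cdot):(0,\infty)\to[0,1]$ is continuous. A sequence $(x_n)$ in $X$ converges to $x\in X$ if $\lim_{n\to\infty}M(x_n,x,t)=1$ for all $t>0$; it is a G-Cauchy sequence if $\lim_{n\to\infty}M(x_n,x_{n+q},t)=1$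 for all $t>0$ and all $q\in\mathbb{N}$; $(X,M,* )$ is G-complete if every G-Cauchy sequence converges. Compactness in $X$ refers to the topology induced by $M$ (open balls $B(x,r,t)=\{y: M(x,y,t)>1-r\}$). For a nonempty $A\subseteq X$, $\rho\in X$ and $t>0$, $\mathcal{M}(\rho,A,t)=\mathcal{M}(A,\rho,t)=\sup\{M(\rho,\mu,t):\mu\in A\}$. For $A,B\in\hat{C}_0(X)$ and $t>0$, $\Theta_{\mathcal{M}}(A,B,t)=\min\{\inf_{\rho\in A}\mathcal{M}(\rho,B,t),\ \inf_{\mu\in B}\mathcal{M}(A,\mu,t)\}$; the triple $(\hat{C}_0(X),\Theta_{\mathcal{M}},* )$ is called the Hausdorff fuzzy metric space. *)

theory Defs
  imports "HOL-Analysis.Analysis"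
begin

definition cont_tnorm :: "(real \<Rightarrow> real \<Rightarrow> real) \<Rightarrow> bool" where
  "cont_tnorm tn \<longleftrightarrow>
     (\<forall>a\<in>{0..1}. \<forall>b\<in>{0..1}. tn a b \<in> {0..1}) \<and>
     (\<forall>a\<in>{0..1}. \<forall>b\<in>{0..1}. \<forall>c\<in>{0..1}. tn (tn a b) c = tn a (tn b c)) \<and>
     (\<forall>a\<in>{0..1}. \<forall>b\<in>{0..1}. tn a b = tn b a) \<and>
     continuous_on ({0..1} \<times> {0..1}) (\<lambda>(a,b). tn a b) \<and>
     (\<forall>a\<in>{0..1}. tn a 1 = a) \<and>
     (\<forall>a\<in>{0..1}. \<forall>b\<in>{0..1}. \<forall>c\<in>{0..1}. \<forall>d\<in>{0..1}.
        a \<le> c \<longrightarrow> b \<le> d \<longrightarrow> tn a b \<le> tn c d)"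

definition fuzzy_metric_space :: "('a \<Rightarrow> 'a \<Rightarrow> real \<Rightarrow> real) \<Rightarrow> (real \<Rightarrow> real \<Rightarrow> real) \<Rightarrow> bool" where
  "fuzzy_metric_space M tn \<longleftrightarrow> cont_tnorm tn \<and>
     (\<forall>x y t. t > 0 \<longrightarrow> M x y t \<in> {0..1}) \<and>
     (\<forall>x y t. t > 0 \<longrightarrow> M x y t > 0) \<and>
     (\<forall>x y. (\<forall>t>0. M x y t = 1) \<longleftrightarrow> x = y) \<and>
     (\<forall>x y t. t > 0 \<longrightarrow> M x y t = M y x t) \<and>
     (\<forall>x y z t s. t > 0 \<longrightarrow> s > 0 \<longrightarrow> M x z (t + s) \<ge> tn (M x y t) (M y z s)) \<and>
     (\<forall>x y. continuous_on {0<..} (M x y))"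

definition fuzzy_converges :: "('a \<Rightarrow> 'a \<Rightarrow> real \<Rightarrow> real) \<Rightarrow> (nat \<Rightarrow> 'a) \<Rightarrow> 'a \<Rightarrow> bool" where
  "fuzzy_converges M xs x \<longleftrightarrow> (\<forall>t>0. (\<lambda>n. M (xs n) x t) \<longlonglongrightarrow> 1)"

definition G_Cauchy :: "('a \<Rightarrow> 'a \<Rightarrow> real \<Rightarrow> real) \<Rightarrow> (nat \<Rightarrow> 'a) \<Rightarrow> bool" where
  "G_Cauchy M xs \<longleftrightarrow> (\<forall>t>0. \<forall>q::nat. (\<lambda>n. M (xs n) (xs (n + q)) t) \<longlonglongrightarrow> 1)"

definition G_complete :: "('a \<Rightarrow> 'a \<Rightarrow> real \<Rightarrow> real) \<Rightarrow> bool" where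
  "G_complete M \<longleftrightarrow> (\<forall>xs. G_Cauchy M xs \<longrightarrow> (\<exists>x. fuzzy_converges M xs x))"

definition fuzzy_ball :: "('a \<Rightarrow> 'a \<Rightarrow> real \<Rightarrow> real) \<Rightarrow> 'a \<Rightarrow> real \<Rightarrow> real \<Rightarrow> 'a set" where
  "fuzzy_ball M x r t = {y. M x y t > 1 - r}"

definition fuzzy_topology :: "('a \<Rightarrow> 'a \<Rightarrow> real \<Rightarrow> real) \<Rightarrow> 'a topology" where
  "fuzzy_topology M = topology (\<lambda>U. \<forall>x\<in>U. \<exists>r t. 0 < r \<and> r < 1 \<and> 0 < t \<and> fuzzy_ball M x r t \<subseteq> U)"

definition Msup :: "('a \<Rightarrow> 'a \<Rightarrow> real \<Rightarrow> real) \<Rightarrow> 'a \<Rightarrow> 'a set \<Rightarrow> real \<Rightarrow> real" where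
  "Msup M x A t = (SUP y\<in>A. M x y t)"

definition Theta :: "('a \<Rightarrow> 'a \<Rightarrow> real \<Rightarrow> real) \<Rightarrow> 'a set \<Rightarrow> 'a set \<Rightarrow> real \<Rightarrow> real" where
  "Theta M A B t = min (INF x\<in>A. Msup M x B t) (INF y\<in>B. Msup M y A t)"

definition C0 :: "('a \<Rightarrow> 'a \<Rightarrow> real \<Rightarrow> real) \<Rightarrow> 'a set set" where
  "C0 M = {A. A \<noteq> {} \<and> compactin (fuzzy_topology M) A}"

end

(*
  Say that x is t-near a set A when sup {M(x,a,t) | a \<in> A} > 1 - t.  The contraction turns
  "x is t-near Tx and y \<in> Tx" into "y is c max(s,t)-near Ty" whenever y is s-near Ty; since every
  point is 1-near every nonempty set, iterating this lowers the level of y to c t.  Hence there is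
  an orbit x(n+1) \<in> T x(n) with M(x(n), x(n+1), c^n) > 1 - c^n, which is G-Cauchy and so converges
  to some z.  Passing the contraction to the limit along the orbit shows that z is t-near Tz for
  every t > 0.  The induced topology is Hausdorff, so the compact set Tz is closed and contains z.
*)

theory Submission
  imports Defs
begin

lemma max_contraction_iterate:
  fixes Q :: "real \<Rightarrow> bool" and c t s0 :: real
  assumes c: "0 < c" "c < 1" and "0 < t" "Q s0" "c * t \<le> s0"
    and step: "\<And>s. Q s \<Longrightarrow> 0 < s \<Longrightarrow> Q (c * max s t)"
  shows "Q (c * t)"
proof -
  have ct: "0 < c * t" "c * t \<le> t" using assms by auto
  have iterate: "Q (max (c ^ k * s0) (c * t))" for k
  proof (induction k)
    case 0
    then show ?case using \<open>Q s0\<close> \<open>c * t \<le> s0\<close> by simp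
  next
    case (Suc k)
    have "c * max (max (c ^ k * s0) (c * t)) t = max (c ^ Suc k * s0) (c * t)"
      using ct c by (simp add: max_mult_distrib_left max.assoc max_absorb2)
    then show ?case using step[OF Suc] ct by (metis less_max_iff_disj)
  qed
  obtain k where "c ^ k < c * t / s0"
    using real_arch_pow_inv[of "c * t / s0" c] ct \<open>c * t \<le> s0\<close> c by auto
  then have "c ^ k * s0 \<le> c * t"
    using ct \<open>c * t \<le> s0\<close> by (simp add: field_simps)
  then show ?thesis using iterate[of k] by (simp add: max_absorb2)
qed

section \<open>Fuzzy metrics\<close>

definition fuzzy_near :: "('a \<Rightarrow> 'a \<Rightarrow> real \<Rightarrow> real) \<Rightarrow> 'a \<Rightarrow> 'a set \<Rightarrow> real \<Rightarrow> bool" where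
  "fuzzy_near M x A t \<longleftrightarrow> 1 - t < Msup M x A t"

locale fuzzy_metric =
  fixes M :: "'a \<Rightarrow> 'a \<Rightarrow> real \<Rightarrow> real" and tn :: "real \<Rightarrow> real \<Rightarrow> real"
  assumes fuzzy_metric_space: "fuzzy_metric_space M tn"
begin

lemma cont_tnorm: "cont_tnorm tn"
  using fuzzy_metric_space by (simp add: fuzzy_metric_space_def)

lemma tnorm_commute: "a \<in> {0..1} \<Longrightarrow> b \<in> {0..1} \<Longrightarrow> tn a b = tn b a"
  using cont_tnorm unfolding cont_tnorm_def by blast

lemma tnorm_one_right: "a \<in> {0..1} \<Longrightarrow> tn a 1 = a"
  using cont_tnorm unfolding cont_tnorm_def by blast

lemma tnorm_one_left: "a \<in> {0..1} \<Longrightarrow> tn 1 a = a"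
  using tnorm_one_right tnorm_commute[of a 1] by simp

lemma tnorm_mono:
  "a \<in> {0..1} \<Longrightarrow> b \<in> {0..1} \<Longrightarrow> c \<in> {0..1} \<Longrightarrow> d \<in> {0..1} \<Longrightarrow> a \<le> c \<Longrightarrow> b \<le> d \<Longrightarrow>
    tn a b \<le> tn c d"
  using cont_tnorm unfolding cont_tnorm_def by blast

lemma tendsto_tnorm:
  assumes "(f \<longlongrightarrow> a) F" "(g \<longlongrightarrow> b) F" "a \<in> {0..1}" "b \<in> {0..1}"
    and "\<forall>\<^sub>F x in F. f x \<in> {0..1} \<and> g x \<in> {0..1}"
  shows "((\<lambda>x. tn (f x) (g x)) \<longlongrightarrow> tn a b) F"
proof -
  have "continuous_on ({0..1} \<times> {0..1}) (\<lambda>(a, b). tn a b)"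
    using cont_tnorm unfolding cont_tnorm_def by blast
  from continuous_on_tendsto_compose[OF this tendsto_Pair[OF assms(1,2)]]
  show ?thesis using assms(3-5) by (simp add: mem_Times_iff)
qed

lemma M_in_unit: "0 < t \<Longrightarrow> M x y t \<in> {0..1}"
  using fuzzy_metric_space by (simp add: fuzzy_metric_space_def)

lemma M_pos: "0 < t \<Longrightarrow> 0 < M x y t"
  using fuzzy_metric_space by (simp add: fuzzy_metric_space_def)

lemma M_le_one: "0 < t \<Longrightarrow> M x y t \<le> 1"
  using M_in_unit by simp

lemma M_eq_one_iff: "(\<forall>t>0. M x y t = 1) \<longleftrightarrow> x = y"
  using fuzzy_metric_space by (simp add: fuzzy_metric_space_def)

lemma M_self: "0 < t \<Longrightarrow> M x x t = 1"
  using M_eq_one_iff by blast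

lemma M_commute: "0 < t \<Longrightarrow> M x y t = M y x t"
  using fuzzy_metric_space by (simp add: fuzzy_metric_space_def)

lemma M_triangle: "0 < t \<Longrightarrow> 0 < s \<Longrightarrow> tn (M x y t) (M y z s) \<le> M x z (t + s)"
  using fuzzy_metric_space by (simp add: fuzzy_metric_space_def)

lemma continuous_on_M: "continuous_on {0<..} (M x y)"
  using fuzzy_metric_space by (simp add: fuzzy_metric_space_def)

lemma M_mono:
  assumes "0 < s" "s \<le> t"
  shows "M x y s \<le> M x y t"
proof (cases "s = t")
  case False
  then have "0 < t - s" using assms by simp
  from M_triangle[OF assms(1) this, of x y y] show ?thesis
    using M_self[OF \<open>0 < t - s\<close>] tnorm_one_right[OF M_in_unit[OF assms(1)]] by simp
qed simp

lemma bdd_above_M: "0 < t \<Longrightarrow> bdd_above ((\<lambda>y. M x y t) ` A)"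
  using M_le_one by (intro bdd_aboveI2[where M = 1]) auto

lemma Msup_upper: "0 < t \<Longrightarrow> y \<in> A \<Longrightarrow> M x y t \<le> Msup M x A t"
  unfolding Msup_def by (rule cSUP_upper) (auto intro: bdd_above_M)

lemma less_Msup_iff: "0 < t \<Longrightarrow> A \<noteq> {} \<Longrightarrow> a < Msup M x A t \<longleftrightarrow> (\<exists>y\<in>A. a < M x y t)"
  unfolding Msup_def by (rule less_cSUP_iff[OF _ bdd_above_M])

lemma Msup_pos: "0 < t \<Longrightarrow> A \<noteq> {} \<Longrightarrow> 0 < Msup M x A t"
  using less_Msup_iff M_pos by blast

lemma Msup_mono: "0 < s \<Longrightarrow> s \<le> t \<Longrightarrow> A \<noteq> {} \<Longrightarrow> Msup M x A s \<le> Msup M x A t"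
  unfolding Msup_def by (rule cSUP_mono) (auto intro: bdd_above_M M_mono)

lemma less_Msup_if_less_Theta:
  assumes "0 < t" "B \<noteq> {}" "x \<in> A" "a < Theta M A B t"
  shows "a < Msup M x B t"
proof -
  have "bdd_below ((\<lambda>x. Msup M x B t) ` A)"
    using Msup_pos[OF assms(1,2)] by (intro bdd_belowI2[where m = 0]) (simp add: less_imp_le)
  then have "(INF x\<in>A. Msup M x B t) \<le> Msup M x B t"
    using assms(3) by (rule cINF_lower)
  then show ?thesis using assms(4) unfolding Theta_def by linarith
qed

lemma fuzzy_near_if_ge_one: "1 \<le> t \<Longrightarrow> A \<noteq> {} \<Longrightarrow> fuzzy_near M x A t"
  using Msup_pos[of t A x] by (simp add: fuzzy_near_def)

lemma fuzzy_near_mono: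
  "fuzzy_near M x A s \<Longrightarrow> 0 < s \<Longrightarrow> s \<le> t \<Longrightarrow> A \<noteq> {} \<Longrightarrow> fuzzy_near M x A t"
  using Msup_mono[of s t A x] by (simp add: fuzzy_near_def)

lemma M_tendsto_one_if_close:
  assumes "e \<longlonglongrightarrow> 0" "\<And>n. 0 < e n" "\<And>n. 1 - e n < M (x n) (y n) (e n)" "0 < t"
  shows "(\<lambda>n. M (x n) (y n) t) \<longlonglongrightarrow> 1"
proof (rule tendsto_sandwich)
  have "\<forall>\<^sub>F n in sequentially. e n < t"
    using assms(1,4) by (rule order_tendstoD)
  then show "\<forall>\<^sub>F n in sequentially. 1 - e n \<le> M (x n) (y n) t"
  proof (rule eventually_mono)
    fix n
    assume "e n < t"
    then show "1 - e n \<le> M (x n) (y n) t"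
      using assms(3)[of n] M_mono[OF assms(2), of n t "x n" "y n"] by simp
  qed
  show "\<forall>\<^sub>F n in sequentially. M (x n) (y n) t \<le> 1"
    using M_le_one[OF assms(4)] by simp
  show "(\<lambda>n. 1 - e n) \<longlonglongrightarrow> 1"
    using tendsto_diff[OF tendsto_const assms(1), of 1] by simp
qed simp

lemma G_Cauchy_if_successive:
  assumes "\<And>t. 0 < t \<Longrightarrow> (\<lambda>n. M (xs n) (xs (Suc n)) t) \<longlonglongrightarrow> 1"
  shows "G_Cauchy M xs"
  unfolding G_Cauchy_def
proof (intro allI impI)
  fix t :: real and q :: nat
  assume "0 < t"
  then show "(\<lambda>n. M (xs n) (xs (n + q)) t) \<longlonglongrightarrow> 1"
  proof (induction q arbitrary: t)
    case 0
    then show ?case by (simp add: M_self)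
  next
    case (Suc q)
    then have t2: "0 < t / 2" by simp
    have "(\<lambda>n. tn (M (xs n) (xs (n + q)) (t / 2)) (M (xs (n + q)) (xs (Suc (n + q))) (t / 2)))
        \<longlonglongrightarrow> tn 1 1"
      using Suc.IH[OF t2] LIMSEQ_ignore_initial_segment[OF assms[OF t2], of q] M_in_unit[OF t2]
      by (intro tendsto_tnorm) auto
    then have lower: "(\<lambda>n. tn (M (xs n) (xs (n + q)) (t / 2))
        (M (xs (n + q)) (xs (Suc (n + q))) (t / 2))) \<longlonglongrightarrow> 1"
      using tnorm_one_right[of 1] by simp
    show ?case
    proof (rule tendsto_sandwich[OF _ _ lower tendsto_const])
      show "\<forall>\<^sub>F n in sequentially. tn (M (xs n) (xs (n + q)) (t / 2))
          (M (xs (n + q)) (xs (Suc (n + q))) (t / 2)) \<le> M (xs n) (xs (n + Suc q)) t"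
        using M_triangle[OF t2 t2] by simp
      show "\<forall>\<^sub>F n in sequentially. M (xs n) (xs (n + Suc q)) t \<le> 1"
        using M_le_one[OF Suc.prems] by simp
    qed
  qed
qed

section \<open>The induced topology\<close>

lemma fuzzy_ball_mono:
  assumes "0 < s" "s \<le> t" "q \<le> r"
  shows "fuzzy_ball M x q s \<subseteq> fuzzy_ball M x r t"
proof
  fix y
  assume "y \<in> fuzzy_ball M x q s"
  then show "y \<in> fuzzy_ball M x r t"
    using M_mono[OF assms(1,2), of x y] assms(3) by (simp add: fuzzy_ball_def)
qed

lemma openin_fuzzy_topology:
  "openin (fuzzy_topology M) U \<longleftrightarrow>
    (\<forall>x\<in>U. \<exists>r t. 0 < r \<and> r < 1 \<and> 0 < t \<and> fuzzy_ball M x r t \<subseteq> U)"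
proof -
  let ?open = "\<lambda>U. \<forall>x\<in>U. \<exists>r t. 0 < r \<and> r < 1 \<and> 0 < t \<and> fuzzy_ball M x r t \<subseteq> U"
  have "istopology ?open"
    unfolding istopology_def
  proof (intro conjI allI impI ballI)
    fix S T x
    assume "?open S" "?open T" "x \<in> S \<inter> T"
    then obtain r t r' t' where "0 < r" "r < 1" "0 < t" "fuzzy_ball M x r t \<subseteq> S"
      and "0 < r'" "r' < 1" "0 < t'" "fuzzy_ball M x r' t' \<subseteq> T"
      by blast
    moreover have
      "fuzzy_ball M x (min r r') (min t t') \<subseteq> fuzzy_ball M x r t \<inter> fuzzy_ball M x r' t'"
      using fuzzy_ball_mono \<open>0 < t\<close> \<open>0 < t'\<close> by (simp add: le_infI1 le_infI2)
    ultimately show "\<exists>r t. 0 < r \<and> r < 1 \<and> 0 < t \<and> fuzzy_ball M x r t \<subseteq> S \<inter> T"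
      by (intro exI[of _ "min r r'"] exI[of _ "min t t'"]) auto
  qed (meson Union_iff Union_upper subset_trans)
  then show ?thesis
    unfolding fuzzy_topology_def by simp
qed

lemma topspace_fuzzy_topology: "topspace (fuzzy_topology M) = UNIV"
proof -
  have "openin (fuzzy_topology M) UNIV"
    unfolding openin_fuzzy_topology by (intro ballI exI[of _ "1 / 2"] exI[of _ 1]) simp
  then show ?thesis using openin_subset by blast
qed

lemma fuzzy_ball_contains_fuzzy_ball:
  assumes "0 < t" "w \<in> fuzzy_ball M y r t"
  obtains q s where "0 < q" "q < 1" "0 < s" "fuzzy_ball M w q s \<subseteq> fuzzy_ball M y r t"
proof -
  have "(M y w \<longlongrightarrow> M y w t) (at_left t)"
    using continuous_on_M[of y w] assms(1)
    by (auto simp: continuous_on_eq_continuous_at isCont_def intro: tendsto_mono[OF at_le])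
  moreover have "1 - r < M y w t"
    using assms(2) by (simp add: fuzzy_ball_def)
  ultimately have "\<forall>\<^sub>F u in at_left t. u \<in> {0<..<t} \<and> 1 - r < M y w u"
    using eventually_at_left_real[OF assms(1)] order_tendstoD(1) eventually_conj by blast
  then obtain u where u: "0 < u" "u < t" "1 - r < M y w u"
    using eventually_happens'[OF trivial_limit_at_left_real] by auto
  have unit: "M y w u \<in> {0..1}"
    using M_in_unit[OF u(1)] .
  have "((\<lambda>q. tn (M y w u) (1 - q)) \<longlongrightarrow> tn (M y w u) (1 - 0)) (at_right 0)"
    using unit eventually_at_right_real[of 0 1]
    by (intro tendsto_tnorm tendsto_intros) (auto elim: eventually_mono)
  then have "\<forall>\<^sub>F q in at_right 0. 1 - r < tn (M y w u) (1 - q)"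
    using u(3) tnorm_one_right[OF unit] by (simp add: order_tendstoD(1))
  then obtain q where q: "0 < q" "q < 1" "1 - r < tn (M y w u) (1 - q)"
    using eventually_happens'[OF _ eventually_conj[OF eventually_at_right_real[of 0 1]]] by auto
  have "fuzzy_ball M w q (t - u) \<subseteq> fuzzy_ball M y r t"
  proof
    fix v
    assume "v \<in> fuzzy_ball M w q (t - u)"
    then have "1 - q < M w v (t - u)"
      by (simp add: fuzzy_ball_def)
    then have "tn (M y w u) (1 - q) \<le> tn (M y w u) (M w v (t - u))"
      using unit M_in_unit[of "t - u"] q u by (intro tnorm_mono) auto
    also have "\<dots> \<le> M y v t"
      using M_triangle[of u "t - u" y w v] u by simp
    finally show "v \<in> fuzzy_ball M y r t"
      using q(3) by (simp add: fuzzy_ball_def)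
  qed
  moreover have "0 < t - u" using u by simp
  ultimately show ?thesis using q that by blast
qed

lemma openin_fuzzy_ball: "0 < t \<Longrightarrow> openin (fuzzy_topology M) (fuzzy_ball M x r t)"
  unfolding openin_fuzzy_topology by (metis fuzzy_ball_contains_fuzzy_ball)

lemma Hausdorff_space_fuzzy_topology: "Hausdorff_space (fuzzy_topology M)"
  unfolding Hausdorff_space_def
proof (intro allI impI)
  fix x y
  assume "x \<in> topspace (fuzzy_topology M) \<and> y \<in> topspace (fuzzy_topology M) \<and> x \<noteq> y"
  then obtain t where t: "0 < t" "M x y t < 1"
    using M_eq_one_iff[of x y] M_le_one by (metis order_less_le)
  have "((\<lambda>q. tn (1 - q) (1 - q)) \<longlongrightarrow> tn (1 - 0) (1 - 0)) (at_right 0)"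
    using eventually_at_right_real[of 0 1]
    by (intro tendsto_tnorm tendsto_intros) (auto elim: eventually_mono)
  then have "\<forall>\<^sub>F q in at_right 0. M x y t < tn (1 - q) (1 - q)"
    using t(2) tnorm_one_right[of 1] by (simp add: order_tendstoD(1))
  then obtain q where q: "0 < q" "q < 1" "M x y t < tn (1 - q) (1 - q)"
    using eventually_happens'[OF _ eventually_conj[OF eventually_at_right_real[of 0 1]]] by auto
  have "disjnt (fuzzy_ball M x q (t / 2)) (fuzzy_ball M y q (t / 2))"
    unfolding disjnt_iff
  proof (intro allI notI)
    fix v
    assume "v \<in> fuzzy_ball M x q (t / 2) \<and> v \<in> fuzzy_ball M y q (t / 2)"
    then have "1 - q < M x v (t / 2)" "1 - q < M v y (t / 2)"
      using M_commute[of "t / 2" y v] t(1) by (simp_all add: fuzzy_ball_def)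
    then have "tn (1 - q) (1 - q) \<le> tn (M x v (t / 2)) (M v y (t / 2))"
      using q M_in_unit[of "t / 2"] t(1) by (intro tnorm_mono) auto
    also have "\<dots> \<le> M x y t"
      using M_triangle[of "t / 2" "t / 2" x v y] t(1) by simp
    finally show False using q(3) by simp
  qed
  moreover have "x \<in> fuzzy_ball M x q (t / 2)" "y \<in> fuzzy_ball M y q (t / 2)"
    using M_self t(1) q(1) by (simp_all add: fuzzy_ball_def)
  ultimately show "\<exists>U V. openin (fuzzy_topology M) U \<and> openin (fuzzy_topology M) V \<and>
      x \<in> U \<and> y \<in> V \<and> disjnt U V"
    using openin_fuzzy_ball t(1) by (meson half_gt_zero)
qed

lemma mem_closedin_if_fuzzy_near:
  assumes "closedin (fuzzy_topology M) A" "A \<noteq> {}" "\<And>t. 0 < t \<Longrightarrow> fuzzy_near M z A t"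
  shows "z \<in> A"
proof (rule ccontr)
  assume "z \<notin> A"
  with assms(1) obtain r t where "0 < r" "0 < t" "fuzzy_ball M z r t \<subseteq> - A"
    unfolding closedin_def topspace_fuzzy_topology openin_fuzzy_topology by (metis Compl_eq_Diff_UNIV ComplI)
  moreover obtain w where "w \<in> A" "1 - min r t < M z w (min r t)"
    using assms(3)[of "min r t"] \<open>0 < r\<close> \<open>0 < t\<close> assms(2) less_Msup_iff
    by (auto simp: fuzzy_near_def)
  moreover have "M z w (min r t) \<le> M z w t"
    using M_mono \<open>0 < r\<close> \<open>0 < t\<close> by simp
  ultimately show False
    unfolding fuzzy_ball_def by force
qed

end

section \<open>Multi-valued Kannan contractions\<close>

locale fuzzy_Kannan_contraction = fuzzy_metric M tn
  for M :: "'a \<Rightarrow> 'a \<Rightarrow> real \<Rightarrow> real" and tn :: "real \<Rightarrow> real \<Rightarrow> real" +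
  fixes T :: "'a \<Rightarrow> 'a set" and c :: real
  assumes compact_values: "\<And>x. T x \<in> C0 M"
    and c: "0 < c" "c < 1"
    and contraction: "\<And>x y t. 0 < t \<Longrightarrow> fuzzy_near M x (T x) t \<Longrightarrow> fuzzy_near M y (T y) t \<Longrightarrow>
      1 - c * t < Theta M (T x) (T y) (c * t)"
begin

lemma T_nonempty: "T x \<noteq> {}"
  using compact_values by (simp add: C0_def)

lemma fuzzy_near_step:
  assumes "y \<in> T x" "fuzzy_near M y (T y) s" "0 < s" "fuzzy_near M x (T x) t" "0 < t"
  shows "fuzzy_near M y (T y) (c * max s t)"
proof -
  have "fuzzy_near M y (T y) (max s t)" "fuzzy_near M x (T x) (max s t)"
    using fuzzy_near_mono assms T_nonempty by (metis max.cobounded1 max.cobounded2)+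
  then have "1 - c * max s t < Theta M (T x) (T y) (c * max s t)"
    using contraction assms(3) by (simp add: less_max_iff_disj)
  then show ?thesis
    using less_Msup_if_less_Theta assms(1,3) c T_nonempty by (simp add: fuzzy_near_def less_max_iff_disj)
qed

lemma fuzzy_near_image:
  assumes "y \<in> T x" "0 < t" "fuzzy_near M x (T x) t"
  shows "fuzzy_near M y (T y) (c * t)"
  using c assms(2)
proof (rule max_contraction_iterate)
  show "fuzzy_near M y (T y) (max 1 t)"
    using fuzzy_near_if_ge_one T_nonempty by simp
  show "c * t \<le> max 1 t"
    using c assms(2) by (simp add: max.coboundedI2)
  show "fuzzy_near M y (T y) (c * max s t)" if "fuzzy_near M y (T y) s" "0 < s" for s
    using fuzzy_near_step[OF assms(1) that assms(3,2)] .
qed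

lemma Kannan_orbit:
  obtains xs where "\<And>n. xs (Suc n) \<in> T (xs n)" "\<And>n. 1 - c ^ n < M (xs n) (xs (Suc n)) (c ^ n)"
    and "\<And>n. fuzzy_near M (xs n) (T (xs n)) (c ^ n)"
proof -
  have "\<exists>xs. \<forall>n. fuzzy_near M (xs n) (T (xs n)) (c ^ n) \<and>
      xs (Suc n) \<in> T (xs n) \<and> 1 - c ^ n < M (xs n) (xs (Suc n)) (c ^ n)"
  proof (rule dependent_nat_choice)
    show "\<exists>x. fuzzy_near M x (T x) (c ^ 0)"
      using fuzzy_near_if_ge_one T_nonempty by simp
    fix x n
    assume "fuzzy_near M x (T x) (c ^ n)"
    moreover from this obtain y where "y \<in> T x" "1 - c ^ n < M x y (c ^ n)"
      using less_Msup_iff c T_nonempty by (auto simp: fuzzy_near_def)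
    ultimately show "\<exists>y. fuzzy_near M y (T y) (c ^ Suc n) \<and> y \<in> T x \<and> 1 - c ^ n < M x y (c ^ n)"
      using fuzzy_near_image[of y x "c ^ n"] c by auto
  qed
  then show ?thesis using that by blast
qed

lemma fuzzy_near_limit_step:
  assumes orbit: "\<And>n. xs (Suc n) \<in> T (xs n)" "\<And>n. fuzzy_near M (xs n) (T (xs n)) (c ^ n)"
    and lim: "fuzzy_converges M xs z"
    and near: "fuzzy_near M z (T z) s" "0 < s" "0 < d"
  shows "fuzzy_near M z (T z) (c * s + d)"
proof (cases "c * s < 1")
  case False
  then show ?thesis using fuzzy_near_if_ge_one T_nonempty near(3) by simp
next
  case True
  have cs: "0 < c * s" using c near(2) by simp
  have "(\<lambda>n. M (xs n) z d) \<longlonglongrightarrow> 1"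
    using lim near(3) by (simp add: fuzzy_converges_def)
  then have "(\<lambda>n. M z (xs (Suc n)) d) \<longlonglongrightarrow> 1"
    using LIMSEQ_Suc M_commute[OF near(3)] by simp
  then have "(\<lambda>n. tn (M z (xs (Suc n)) d) (1 - c * s)) \<longlonglongrightarrow> tn 1 (1 - c * s)"
    using M_in_unit near(3) True cs by (intro tendsto_tnorm) auto
  moreover have "tn 1 (1 - c * s) = 1 - c * s"
    using True cs by (simp add: tnorm_one_left)
  ultimately have "\<forall>\<^sub>F n in sequentially. 1 - (c * s + d) < tn (M z (xs (Suc n)) d) (1 - c * s)"
    using near(3) by (simp add: order_tendstoD(1))
  moreover have "\<forall>\<^sub>F n in sequentially. c ^ n < s"
    using order_tendstoD(2)[OF LIMSEQ_power_zero near(2)] c by simp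
  ultimately have "\<forall>\<^sub>F n in sequentially.
      1 - (c * s + d) < tn (M z (xs (Suc n)) d) (1 - c * s) \<and> c ^ n < s"
    by (rule eventually_conj)
  then obtain n where n: "1 - (c * s + d) < tn (M z (xs (Suc n)) d) (1 - c * s)" "c ^ n < s"
    by (auto simp: eventually_sequentially)
  have "fuzzy_near M (xs n) (T (xs n)) s"
    using fuzzy_near_mono[OF orbit(2)] n(2) c T_nonempty by simp
  then have "1 - c * s < Theta M (T (xs n)) (T z) (c * s)"
    using contraction near(1,2) by simp
  then have "1 - c * s < Msup M (xs (Suc n)) (T z) (c * s)"
    by (rule less_Msup_if_less_Theta[OF cs T_nonempty orbit(1)])
  then obtain w where w: "w \<in> T z" "1 - c * s < M (xs (Suc n)) w (c * s)"
    using less_Msup_iff[OF cs T_nonempty] by auto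
  note n(1)
  also have "tn (M z (xs (Suc n)) d) (1 - c * s) \<le>
      tn (M z (xs (Suc n)) d) (M (xs (Suc n)) w (c * s))"
    using M_in_unit near(3) cs True w(2) by (intro tnorm_mono) auto
  also have "\<dots> \<le> M z w (d + c * s)"
    using M_triangle[OF near(3) cs] .
  also have "\<dots> \<le> Msup M z (T z) (d + c * s)"
    using Msup_upper[OF _ w(1)] near(3) cs by simp
  finally show ?thesis by (simp add: fuzzy_near_def add.commute)
qed

lemma fuzzy_near_limit:
  assumes "\<And>n. xs (Suc n) \<in> T (xs n)" "\<And>n. fuzzy_near M (xs n) (T (xs n)) (c ^ n)"
    and "fuzzy_converges M xs z" "0 < t"
  shows "fuzzy_near M z (T z) t"
proof -
  \<comment> \<open>The slack d > 0 of the limit step is absorbed by contracting with a ratio c' > c.\<close>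
  define c' where "c' = (1 + c) / 2"
  have c': "0 < c'" "c' < 1" "c < c'"
    using c by (simp_all add: c'_def)
  have "fuzzy_near M z (T z) (c' * (t / c'))"
  proof (rule max_contraction_iterate[OF c'(1,2)])
    show "0 < t / c'" "fuzzy_near M z (T z) (max 1 t)" "c' * (t / c') \<le> max 1 t"
      using c' assms(4) fuzzy_near_if_ge_one T_nonempty by auto
    fix s
    assume "fuzzy_near M z (T z) s" "0 < s"
    moreover have "c * s < c' * max s (t / c')"
    proof -
      have "c * s < c' * s" using c' \<open>0 < s\<close> by simp
      also have "\<dots> \<le> c' * max s (t / c')" using c' by simp
      finally show ?thesis .
    qed
    ultimately have "fuzzy_near M z (T z) (c * s + (c' * max s (t / c') - c * s))"
      by (intro fuzzy_near_limit_step[OF assms(1-3)]) simp_all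
    then show "fuzzy_near M z (T z) (c' * max s (t / c'))" by simp
  qed
  then show ?thesis using c' by simp
qed

end

theorem mainTheorem1:
  fixes M :: "'a \<Rightarrow> 'a \<Rightarrow> real \<Rightarrow> real"
    and tn :: "real \<Rightarrow> real \<Rightarrow> real"
    and T :: "'a \<Rightarrow> 'a set"
    and c :: real
  assumes "fuzzy_metric_space M tn"
    and "G_complete M"
    and "\<forall>x. T x \<in> C0 M"
    and "0 < c" and "c < 1"
    and "\<forall>x y t. t > 0 \<longrightarrow> min (Msup M x (T x) t) (Msup M y (T y) t) > 1 - t
           \<longrightarrow> Theta M (T x) (T y) (c * t) > 1 - c * t"
  shows "\<exists>z. z \<in> T z"
proof -
  interpret fuzzy_Kannan_contraction M tn T c
    using assms by unfold_locales (auto simp: fuzzy_near_def)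
  obtain xs where orbit: "\<And>n. xs (Suc n) \<in> T (xs n)"
    "\<And>n. 1 - c ^ n < M (xs n) (xs (Suc n)) (c ^ n)" "\<And>n. fuzzy_near M (xs n) (T (xs n)) (c ^ n)"
    using Kannan_orbit by blast
  have "G_Cauchy M xs"
    using orbit(2) c LIMSEQ_power_zero[of c]
    by (intro G_Cauchy_if_successive M_tendsto_one_if_close[where e = "\<lambda>n. c ^ n"]) auto
  then obtain z where "fuzzy_converges M xs z"
    using \<open>G_complete M\<close> by (auto simp: G_complete_def)
  then have "fuzzy_near M z (T z) t" if "0 < t" for t
    using fuzzy_near_limit[OF orbit(1,3)] that by blast
  moreover have "closedin (fuzzy_topology M) (T z)"
    using compact_values Hausdorff_space_fuzzy_topology by (simp add: C0_def compactin_imp_closedin)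
  ultimately have "z \<in> T z"
    using mem_closedin_if_fuzzy_near T_nonempty by blast
  then show ?thesis ..
qed

end
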